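(* Let $h_1,h_2,h_3\in\mathbb R$ with $h_1^2\geq h_2^2\geq h_3^2$ and $P>0$, and let $\underline{C}_3$ be defined as follows: $\underline{C}_3$ is the maximum, over $\alpha_{12},\alpha_{23},\alpha_{31}\in[0,1]$ with $\alpha_{12}+\alpha_{23}+\alpha_{31}=1$, of $$2\alpha_{12}\min\Big\{C^+\big(h_2^2P_{21}^*-\tfrac12\big),C(h_2^2P)\Big\}+2\alpha_{23}\min\Big\{C^+\big(h_3^2P_{31}^*-\tfrac12\big),C(h_3^2P)\Big\}+2\alpha_{31}\min\Big\{C^+\big(h_3^2P_{32}^*-\tfrac12\big),C(h_3^2P)\Big\},$$ where $h_2^2P_{21}^*=\min\{\frac{h_1^2P}{\alpha_{12}+\alpha_{31}},\frac{h_2^2P}{\alpha_{12}+\alpha_{23}}\}$, $h_3^2P_{31}^*=\min\{\frac{h_1^2P}{\alpha_{12}+\alpha_{31}},\frac{h_3^2P}{\alpha_{23}+\alpha_{31}}\}$, $h_3^2P_{32}^*=\min\{\frac{h_2^2P}{\alpha_{12}+\alpha_{23}},\frac{h_3^2P}{\alpha_{23}+\alpha_{31}}\}$. Then $$\underline{C}_3\geq 2\min\Big\{C^+\big(h_2^2P-\tfrac12\big),\ C(h_2^2P)\Big\}.$$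
   Context: $C(x)=\frac12\log_2(1+x)$ and $C^+(x)=\max\{0,C(x)\}$. A fraction with zero denominator and positive numerator is interpreted as $+\infty$. *)

theory Defs
  imports "HOL-Analysis.Analysis"
begin

definition Cap :: "real \<Rightarrow> real" where
  "Cap x = (1/2) * log 2 (1 + x)"

definition Cap_plus :: "real \<Rightarrow> real" where
  "Cap_plus x = max 0 (Cap x)"

text \<open>Quotient with the convention: zero denominator and positive numerator gives +infinity.
  (The remaining case 0/0 is set to 0; it only arises when the numerator h^2 P is 0.)\<close>
definition qdiv :: "real \<Rightarrow> real \<Rightarrow> ereal" where
  "qdiv n d = (if d = 0 then (if n > 0 then \<infinity> else 0) else ereal (n / d))"

definition Cap_plus_e :: "ereal \<Rightarrow> ereal" where
  "Cap_plus_e x = (case x of ereal r \<Rightarrow> ereal (Cap_plus r) | PInfty \<Rightarrow> \<infinity> | MInfty \<Rightarrow> 0)"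

definition C3_objective :: "real \<Rightarrow> real \<Rightarrow> real \<Rightarrow> real \<Rightarrow> real \<Rightarrow> real \<Rightarrow> real \<Rightarrow> ereal" where
  "C3_objective h1 h2 h3 P a12 a23 a31 =
     (let P21 = min (qdiv (h1^2 * P) (a12 + a31)) (qdiv (h2^2 * P) (a12 + a23));
          P31 = min (qdiv (h1^2 * P) (a12 + a31)) (qdiv (h3^2 * P) (a23 + a31));
          P32 = min (qdiv (h2^2 * P) (a12 + a23)) (qdiv (h3^2 * P) (a23 + a31))
      in ereal (2 * a12) * min (Cap_plus_e (P21 - ereal (1/2))) (ereal (Cap (h2^2 * P)))
       + ereal (2 * a23) * min (Cap_plus_e (P31 - ereal (1/2))) (ereal (Cap (h3^2 * P)))
       + ereal (2 * a31) * min (Cap_plus_e (P32 - ereal (1/2))) (ereal (Cap (h3^2 * P))))"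

definition C3_lower :: "real \<Rightarrow> real \<Rightarrow> real \<Rightarrow> real \<Rightarrow> ereal" where
  "C3_lower h1 h2 h3 P =
     (SUP a \<in> {(a12, a23, a31). 0 \<le> a12 \<and> a12 \<le> 1 \<and> 0 \<le> a23 \<and> a23 \<le> 1 \<and> 0 \<le> a31 \<and> a31 \<le> 1
                                  \<and> a12 + a23 + a31 = 1}.
        (case a of (a12, a23, a31) \<Rightarrow> C3_objective h1 h2 h3 P a12 a23 a31))"

end

theory Submission
  imports Defs
begin

text \<open>Giving the whole time to the pair (1,2), i.e. \<open>\<alpha>\<^sub>1\<^sub>2 = 1\<close>, is a feasible choice; the two
  other terms vanish and \<open>h\<^sub>2\<^sup>2P\<^sup>*\<^sub>2\<^sub>1 = min(h\<^sub>1\<^sup>2P, h\<^sub>2\<^sup>2P)\<close>, which is \<open>h\<^sub>2\<^sup>2P\<close> as \<open>h\<^sub>1\<^sup>2 \<ge> h\<^sub>2\<^sup>2\<close>.\<close>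

lemma C3_objective_le_C3_lower:
  assumes "0 \<le> a12" "a12 \<le> 1" "0 \<le> a23" "a23 \<le> 1" "0 \<le> a31" "a31 \<le> 1"
    and "a12 + a23 + a31 = 1"
  shows "C3_objective h1 h2 h3 P a12 a23 a31 \<le> C3_lower h1 h2 h3 P"
  unfolding C3_lower_def
  by (rule SUP_upper2[where i="(a12, a23, a31)"]) (use assms in auto)

lemma C3_objective_pair12_only:
  "C3_objective h1 h2 h3 P 1 0 0
     = ereal (2 * min (Cap_plus (min (h1^2 * P) (h2^2 * P) - 1/2)) (Cap (h2^2 * P)))"
proof -
  have P21: "min (qdiv (h1^2 * P) (1 + 0)) (qdiv (h2^2 * P) (1 + 0))
               = ereal (min (h1^2 * P) (h2^2 * P))"
    by (simp add: qdiv_def min_def)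
  have vanish: "ereal (2 * 0) * x = 0" for x :: ereal
    by (simp add: zero_ereal_def[symmetric])
  show ?thesis
    unfolding C3_objective_def Let_def P21 vanish
    by (simp add: Cap_plus_e_def min_def)
qed

theorem corollary4:
  fixes h1 h2 h3 P :: real
  assumes "h1^2 \<ge> h2^2" and "h2^2 \<ge> h3^2" and "P > 0"
  shows "C3_lower h1 h2 h3 P \<ge> ereal (2 * min (Cap_plus (h2^2 * P - 1/2)) (Cap (h2^2 * P)))"
proof -
  have "min (h1^2 * P) (h2^2 * P) = h2^2 * P"
    using assms(1,3) by (simp add: min_def mult_right_mono)
  then have "C3_objective h1 h2 h3 P 1 0 0
               = ereal (2 * min (Cap_plus (h2^2 * P - 1/2)) (Cap (h2^2 * P)))"
    by (simp add: C3_objective_pair12_only)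
  moreover have "C3_objective h1 h2 h3 P 1 0 0 \<le> C3_lower h1 h2 h3 P"
    by (rule C3_objective_le_C3_lower) auto
  ultimately show ?thesis
    by simp
qed

end
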